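(* In the joint communication and channel discrimination setting described in the context, let $\{\mathcal{C}_n\}_{n\in\mathbb{N}}$ be a sequence of codebooks (of codes with $P_{e,n}\to0$) that achieves the tuple $(R,E_0,E_1)\in\mathcal{R}$. Then there exists a sequence of constant composition codes that also achieves $(R,E_0,E_1)$.
   Context: Finite alphabets $\mathcal{X},\mathcal{Y},\mathcal{Z}$; memoryless channels $P_{Z^n|X^n}(z^n|x^n)=\prod_iP_{Z|X}(z_i|x_i)$ (communication) and $W_n(y^n|x^n)=\prod_iW(y_i|x_i)$, $V_n(y^n|x^n)=\prod_iV(y_i|x_i)$ (sensing under $\theta=0$, $\theta=1$), with $W(y|x)V(y|x)\ne0$; cost function $b:\mathcal{X}\to\mathbb{R}_+$ and budget $B\ge0$. An $(n,|\mathcal{M}_n|)$-code has message set $\mathcal{M}_n=\{1,\dots,|\mathcal{M}_n|\}$, encoder $f_n:\mathcal{M}_n\to\mathcal{X}^n$ with codewords satisfying $\frac1n\sum_ib(x_i)\le B$ (codebook $\mathcal{C}_n$), decoder $\varphi_n:\mathcal{Z}^n\to\mathcal{M}_n$, and discrimination function $\psi_n(y^n,x^n)\in\{0,1\}$. $P_{e,n}=\max_m\Pr[\varphi_n(Z^n)\ne m\mid M=m]$; $\varepsilon_{0,n}(x^n)=\sum_{y^n:\psi_n(y^n,x^n)=1}W_n(y^n|x^n)$, $\varepsilon_{1,n}(x^n)=\sum_{y^n:\psi_n(y^n,x^n)=0}V_n(y^n|x^n)$, $\varepsilon_{j,n}(\mathcal{C}_n)=\max_{x^n\in\mathcal{C}_n}\varepsilon_{j,n}(x^n)$,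 and it is required that $\max\{\varepsilon_{0,n}(\mathcal{C}_n),\varepsilon_{1,n}(\mathcal{C}_n)\}\le\tau$ for all $n$ for some constant $\tau<1$. A sequence of codes achieves $(R,E_0,E_1)$ if $P_{e,n}\to0$, $R=\liminf_n\frac1n\log|\mathcal{M}_n|$, $E_j=\liminf_n-\frac1n\log\varepsilon_{j,n}(\mathcal{C}_n)$; $\mathcal{R}$ is the closure of the set of achievable triples. A constant composition code is one in which all codewords have the same type (empirical distribution $\mathsf{P}_{x^n}(a)=\frac1n|\{i:x_i=a\}|$). *)

theory Defs
  imports "HOL-Analysis.Analysis"
begin

text \<open>A channel Q :: 'a => 'b => real
  is read as Q x y = Q(y|x). Codes are given for every blocklength n >= 1 by
  the number of messages Mn n, the encoder enc n (messages are 1..Mn n),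
  the decoder dec n and the discrimination function dsc n (True = decide 1).\<close>

definition seqs :: "nat \<Rightarrow> 'a list set" where
  "seqs n = {xs. length xs = n}"

definition prod_chan :: "('a \<Rightarrow> 'b \<Rightarrow> real) \<Rightarrow> 'a list \<Rightarrow> 'b list \<Rightarrow> real" where
  "prod_chan Q xs ys = (\<Prod>i<length xs. Q (xs ! i) (ys ! i))"

definition is_channel :: "('a::finite \<Rightarrow> 'b::finite \<Rightarrow> real) \<Rightarrow> bool" where
  "is_channel Q \<longleftrightarrow> (\<forall>x y. 0 \<le> Q x y) \<and> (\<forall>x. (\<Sum>y\<in>UNIV. Q x y) = 1)"

definition codebook :: "(nat \<Rightarrow> nat) \<Rightarrow> (nat \<Rightarrow> nat \<Rightarrow> 'x list) \<Rightarrow> nat \<Rightarrow> 'x list set" where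
  "codebook Mn enc n = enc n ` {1..Mn n}"

definition valid_code :: "('x \<Rightarrow> real) \<Rightarrow> real \<Rightarrow> (nat \<Rightarrow> nat) \<Rightarrow> (nat \<Rightarrow> nat \<Rightarrow> 'x list)
    \<Rightarrow> (nat \<Rightarrow> 'z list \<Rightarrow> nat) \<Rightarrow> nat \<Rightarrow> bool" where
  "valid_code b B Mn enc dec n \<longleftrightarrow>
     1 \<le> Mn n \<and>
     (\<forall>m\<in>{1..Mn n}. length (enc n m) = n \<and> (\<Sum>i<n. b (enc n m ! i)) / real n \<le> B) \<and>
     (\<forall>zs. dec n zs \<in> {1..Mn n})"

definition Pe :: "('x \<Rightarrow> 'z \<Rightarrow> real) \<Rightarrow> (nat \<Rightarrow> nat) \<Rightarrow> (nat \<Rightarrow> nat \<Rightarrow> 'x list)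
    \<Rightarrow> (nat \<Rightarrow> 'z list \<Rightarrow> nat) \<Rightarrow> nat \<Rightarrow> real" where
  "Pe P Mn enc dec n =
     Max ((\<lambda>m. \<Sum>zs\<in>{zs\<in>seqs n. dec n zs \<noteq> m}. prod_chan P (enc n m) zs) ` {1..Mn n})"

definition eps0 :: "('x \<Rightarrow> 'y \<Rightarrow> real) \<Rightarrow> (nat \<Rightarrow> 'y list \<Rightarrow> 'x list \<Rightarrow> bool) \<Rightarrow> nat \<Rightarrow> 'x list \<Rightarrow> real" where
  "eps0 W dsc n xs = (\<Sum>ys\<in>{ys\<in>seqs n. dsc n ys xs}. prod_chan W xs ys)"

definition eps1 :: "('x \<Rightarrow> 'y \<Rightarrow> real) \<Rightarrow> (nat \<Rightarrow> 'y list \<Rightarrow> 'x list \<Rightarrow> bool) \<Rightarrow> nat \<Rightarrow> 'x list \<Rightarrow> real" where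
  "eps1 V dsc n xs = (\<Sum>ys\<in>{ys\<in>seqs n. \<not> dsc n ys xs}. prod_chan V xs ys)"

definition eps0C where
  "eps0C W Mn enc dsc n = Max (eps0 W dsc n ` codebook Mn enc n)"

definition eps1C where
  "eps1C V Mn enc dsc n = Max (eps1 V dsc n ` codebook Mn enc n)"

definition achieves ::
  "('x::finite \<Rightarrow> 'z::finite \<Rightarrow> real) \<Rightarrow> ('x \<Rightarrow> 'y::finite \<Rightarrow> real) \<Rightarrow> ('x \<Rightarrow> 'y \<Rightarrow> real)
   \<Rightarrow> ('x \<Rightarrow> real) \<Rightarrow> real
   \<Rightarrow> (nat \<Rightarrow> nat) \<Rightarrow> (nat \<Rightarrow> nat \<Rightarrow> 'x list) \<Rightarrow> (nat \<Rightarrow> 'z list \<Rightarrow> nat)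
   \<Rightarrow> (nat \<Rightarrow> 'y list \<Rightarrow> 'x list \<Rightarrow> bool) \<Rightarrow> real \<Rightarrow> real \<Rightarrow> real \<Rightarrow> bool" where
  "achieves P W V b B Mn enc dec dsc R E0 E1 \<longleftrightarrow>
     (\<forall>n\<ge>1. valid_code b B Mn enc dec n) \<and>
     (\<exists>\<tau><1. \<forall>n\<ge>1. max (eps0C W Mn enc dsc n) (eps1C V Mn enc dsc n) \<le> \<tau>) \<and>
     (Pe P Mn enc dec \<longlonglongrightarrow> 0) \<and>
     liminf (\<lambda>n. ereal (ln (real (Mn n)) / real n)) = ereal R \<and>
     liminf (\<lambda>n. ereal (- ln (eps0C W Mn enc dsc n) / real n)) = ereal E0 \<and>
     liminf (\<lambda>n. ereal (- ln (eps1C V Mn enc dsc n) / real n)) = ereal E1"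

definition type_of :: "'x list \<Rightarrow> 'x \<Rightarrow> real" where
  "type_of xs a = real (length (filter (\<lambda>x. x = a) xs)) / real (length xs)"

definition constant_composition :: "(nat \<Rightarrow> nat) \<Rightarrow> (nat \<Rightarrow> nat \<Rightarrow> 'x list) \<Rightarrow> bool" where
  "constant_composition Mn enc \<longleftrightarrow>
     (\<forall>n\<ge>1. \<forall>xs\<in>codebook Mn enc n. \<forall>xs'\<in>codebook Mn enc n. type_of xs = type_of xs')"

end

theory Submission
  imports Defs "HOL-Real_Asymp.Real_Asymp"
begin

text \<open>Some type class contains at least a fraction (n + 1) ^ -|X| of the messages, so the
  subcode on the largest type class loses no rate, and its decoding error is at most that of
  the original code. Its discrimination errors can only be smaller than the original ones,
  which might increase the exponents. They are raised back by enlarging, for every codeword,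
  the region where one decision is taken by an event of probability between w t and t, where
  w is the least transition probability and t is a fixed fraction of the original error. The
  raised error is then within constant factors of the original one, so its exponent is
  unchanged, while the other error only decreases. Since both errors cannot be raised at the
  same blocklength, the first one is raised along a subsequence on which the original
  exponent E0 is approached, and the second one along a disjoint subsequence approaching E1.\<close>

section \<open>Probabilities of sets of output sequences\<close>

definition seq_prob :: "('x \<Rightarrow> 'y \<Rightarrow> real) \<Rightarrow> 'x list \<Rightarrow> 'y list set \<Rightarrow> real" where
  "seq_prob Q xs S = (\<Sum>ys\<in>S. prod_chan Q xs ys)"

lemma finite_seqs [simp]: "finite (seqs n :: 'a::finite list set)"
  using finite_lists_length_eq[of "UNIV :: 'a set" n] by (simp add: seqs_def)

lemma seqs_Suc: "seqs (Suc n) = (\<lambda>(y, ys). y # ys) ` (UNIV \<times> seqs n)"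
  by (auto simp: seqs_def image_iff length_Suc_conv)

lemma sum_seqs_prod:
  fixes f :: "nat \<Rightarrow> 'y::finite \<Rightarrow> 'a::comm_semiring_1"
  shows "(\<Sum>ys\<in>seqs n. \<Prod>i<n. f i (ys ! i)) = (\<Prod>i<n. \<Sum>y\<in>UNIV. f i y)"
proof (induction n arbitrary: f)
  case 0
  then show ?case by (simp add: seqs_def)
next
  case (Suc n)
  have inj: "inj_on (\<lambda>(y, ys). y # ys) (UNIV \<times> seqs n)"
    by (auto simp: inj_on_def)
  have "(\<Sum>ys\<in>seqs (Suc n). \<Prod>i<Suc n. f i (ys ! i))
      = (\<Sum>(y, ys)\<in>UNIV \<times> seqs n. f 0 y * (\<Prod>i<n. f (Suc i) (ys ! i)))"
    unfolding seqs_Suc sum.reindex[OF inj]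
    by (simp only: prod.lessThan_Suc_shift) (simp add: case_prod_beta)
  also have "\<dots> = (\<Sum>y\<in>UNIV. f 0 y) * (\<Prod>i<n. \<Sum>y\<in>UNIV. f (Suc i) y)"
    by (simp add: sum.cartesian_product[symmetric] sum_distrib_left[symmetric]
        sum_distrib_right Suc.IH[of "\<lambda>i. f (Suc i)"])
  finally show ?case by (simp only: prod.lessThan_Suc_shift)
qed

lemma seq_prob_cylinder:
  fixes Q :: "'x::finite \<Rightarrow> 'y::finite \<Rightarrow> real"
  assumes "is_channel Q" "length xs = n" "k \<le> n"
  shows "seq_prob Q xs {ys\<in>seqs n. \<forall>i<k. ys ! i = c i} = (\<Prod>i<k. Q (xs ! i) (c i))"
proof -
  define f where "f i y = (if i < k then if y = c i then Q (xs ! i) y else 0 else Q (xs ! i) y)"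
    for i y
  have "(\<Prod>i<n. f i (ys ! i)) = (if \<forall>i<k. ys ! i = c i then prod_chan Q xs ys else 0)" for ys
    using assms(2,3) by (auto simp: f_def prod_chan_def intro!: prod.cong)
  then have "seq_prob Q xs {ys\<in>seqs n. \<forall>i<k. ys ! i = c i} = (\<Sum>ys\<in>seqs n. \<Prod>i<n. f i (ys ! i))"
    by (simp add: seq_prob_def sum.inter_filter)
  also have "\<dots> = (\<Prod>i<n. if i < k then Q (xs ! i) (c i) else 1)"
    using assms(1) unfolding sum_seqs_prod by (intro prod.cong) (auto simp: f_def is_channel_def)
  also have "\<dots> = (\<Prod>i<k. Q (xs ! i) (c i))"
  proof -
    have "{..<n} \<inter> {i. i < k} = {..<k}" using assms(3) by auto
    then show ?thesis by (simp add: prod.If_cases)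
  qed
  finally show ?thesis .
qed

lemma seq_prob_seqs:
  fixes Q :: "'x::finite \<Rightarrow> 'y::finite \<Rightarrow> real"
  assumes "is_channel Q" "length xs = n"
  shows "seq_prob Q xs (seqs n) = 1"
  using seq_prob_cylinder[OF assms, of 0] by simp

lemma prod_chan_nonneg: "is_channel Q \<Longrightarrow> 0 \<le> prod_chan Q xs ys"
  by (auto simp: prod_chan_def is_channel_def intro!: prod_nonneg)

lemma seq_prob_mono:
  "is_channel Q \<Longrightarrow> S \<subseteq> T \<Longrightarrow> finite T \<Longrightarrow> seq_prob Q xs S \<le> seq_prob Q xs T"
  unfolding seq_prob_def by (rule sum_mono2) (auto intro!: prod_chan_nonneg)

lemma seq_prob_Un_le:
  "is_channel Q \<Longrightarrow> finite S \<Longrightarrow> finite T \<Longrightarrow> seq_prob Q xs (S \<union> T) \<le> seq_prob Q xs S + seq_prob Q xs T"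
  unfolding seq_prob_def using sum_Un[of S T "prod_chan Q xs"]
  by (simp add: sum_nonneg prod_chan_nonneg)

lemma seq_prob_pos:
  "\<forall>x y. 0 < Q x y \<Longrightarrow> finite S \<Longrightarrow> S \<noteq> {} \<Longrightarrow> 0 < seq_prob Q xs S"
  unfolding seq_prob_def prod_chan_def by (intro sum_pos prod_pos) auto

lemma prod_chan_le_seq_prob:
  "is_channel Q \<Longrightarrow> finite S \<Longrightarrow> ys \<in> S \<Longrightarrow> prod_chan Q xs ys \<le> seq_prob Q xs S"
  unfolding seq_prob_def by (rule member_le_sum) (auto intro: prod_chan_nonneg)

lemma channel_le_1:
  fixes Q :: "'x::finite \<Rightarrow> 'y::finite \<Rightarrow> real"
  assumes "is_channel Q"
  shows "Q x y \<le> 1"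
proof -
  have "Q x y \<le> (\<Sum>y\<in>UNIV. Q x y)"
    using assms by (intro member_le_sum) (auto simp: is_channel_def)
  then show ?thesis
    using assms by (simp add: is_channel_def)
qed

text \<open>Walking down the cylinders of a sequence of least likely output symbols, the probability
  decreases by a factor at least q at each step; so the first cylinder of probability at most t
  has probability at least q t, unless even the whole sequence is more likely than t.\<close>
lemma small_event_or_heavy_atoms:
  fixes Q :: "'x::finite \<Rightarrow> 'y::finite \<Rightarrow> real"
  assumes Q: "is_channel Q" and q: "\<forall>x y. q \<le> Q x y" and len: "length xs = n"
    and t: "0 < t" "t < 1"
  shows "(\<exists>S\<subseteq>seqs n. q * t \<le> seq_prob Q xs S \<and> seq_prob Q xs S \<le> t)
    \<or> (\<forall>ys\<in>seqs n. t < prod_chan Q xs ys)"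
proof -
  have "\<exists>y0. \<forall>y. Q x y0 \<le> Q x y" for x
    using ex_is_arg_min_if_finite[of UNIV "Q x"] by (auto simp: is_arg_min_def not_less)
  then obtain ymin where ymin: "\<And>x y. Q x (ymin x) \<le> Q x y"
    by metis
  define c where "c i = ymin (xs ! i)" for i
  define cyl where "cyl k = {ys\<in>seqs n. \<forall>i<k. ys ! i = c i}" for k
  have cyl_prob: "seq_prob Q xs (cyl k) = (\<Prod>i<k. Q (xs ! i) (c i))" if "k \<le> n" for k
    unfolding cyl_def using seq_prob_cylinder[OF Q len that] .
  show ?thesis
  proof (cases "\<exists>k\<le>n. seq_prob Q xs (cyl k) \<le> t")
    case True
    then obtain K where K: "K \<le> n" "seq_prob Q xs (cyl K) \<le> t"
      and before: "\<And>k. k < K \<Longrightarrow> t < seq_prob Q xs (cyl k)"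
      using ex_least_nat_le[where P = "\<lambda>k. seq_prob Q xs (cyl k) \<le> t"]
      by (metis le_trans not_le)
    have "K \<noteq> 0"
      using K t cyl_prob[of 0] by (metis lessThan_0 not_le prod.empty)
    then obtain j where j: "K = Suc j"
      using not0_implies_Suc by blast
    have "q * t \<le> Q (xs ! j) (c j) * t"
      using q t by simp
    also have "\<dots> \<le> Q (xs ! j) (c j) * seq_prob Q xs (cyl j)"
      using before[of j] j Q by (intro mult_left_mono) (auto simp: is_channel_def)
    also have "\<dots> = seq_prob Q xs (cyl K)"
      using K(1) j cyl_prob by (simp add: mult.commute)
    finally show ?thesis
      using K by (intro disjI1 exI[of _ "cyl K"]) (auto simp: cyl_def)
  next
    case False
    have "t < prod_chan Q xs ys" if "ys \<in> seqs n" for ys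
    proof -
      have "t < seq_prob Q xs (cyl n)"
        using False by auto
      also have "\<dots> \<le> prod_chan Q xs ys"
        using cyl_prob[of n] Q len ymin unfolding prod_chan_def c_def
        by (auto intro!: prod_mono simp: is_channel_def)
      finally show ?thesis .
    qed
    then show ?thesis by blast
  qed
qed

lemma enlarge_event:
  fixes Q :: "'x::finite \<Rightarrow> 'y::finite \<Rightarrow> real"
  assumes Q: "is_channel Q" and q: "\<forall>x y. q \<le> Q x y" and len: "length xs = n"
    and A: "A \<subseteq> seqs n" "0 < seq_prob Q xs A" and t: "0 < t" "t < 1"
  shows "\<exists>A'. A \<subseteq> A' \<and> A' \<subseteq> seqs n \<and> q * t \<le> seq_prob Q xs A'
    \<and> seq_prob Q xs A' \<le> seq_prob Q xs A + t"
  using small_event_or_heavy_atoms[OF Q q len t]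
proof
  assume "\<exists>S\<subseteq>seqs n. q * t \<le> seq_prob Q xs S \<and> seq_prob Q xs S \<le> t"
  then obtain S where S: "S \<subseteq> seqs n" "q * t \<le> seq_prob Q xs S" "seq_prob Q xs S \<le> t"
    by blast
  have fin: "finite A" "finite S"
    using A(1) S(1) by (auto intro: rev_finite_subset[OF finite_seqs])
  have "q * t \<le> seq_prob Q xs (A \<union> S)"
    using order_trans[OF S(2) seq_prob_mono[OF Q, of S "A \<union> S"]] fin by simp
  moreover have "seq_prob Q xs (A \<union> S) \<le> seq_prob Q xs A + t"
    using seq_prob_Un_le[OF Q fin, of xs] S(3) by linarith
  ultimately show ?thesis
    using A(1) S(1) by (intro exI[of _ "A \<union> S"]) auto
next
  assume heavy: "\<forall>ys\<in>seqs n. t < prod_chan Q xs ys"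
  obtain ys where ys: "ys \<in> A"
    using A(2) by (force simp: seq_prob_def)
  have "q * t \<le> t"
  proof -
    have "q \<le> 1"
      using q channel_le_1[OF Q] order_trans by blast
    then show ?thesis
      using t by simp
  qed
  also have "t < prod_chan Q xs ys"
    using heavy ys A(1) by auto
  also have "\<dots> \<le> seq_prob Q xs A"
    using ys A(1) by (intro prod_chan_le_seq_prob[OF Q]) (auto intro: finite_subset)
  finally show ?thesis
    using A(1) t by (intro exI[of _ A]) auto
qed

section \<open>Raising the discrimination errors\<close>

lemma eps0_eq_seq_prob: "eps0 W dsc n x = seq_prob W x {ys\<in>seqs n. dsc n ys x}"
  by (simp add: eps0_def seq_prob_def)

lemma eps1_eq_seq_prob: "eps1 V dsc n x = seq_prob V x (seqs n - {ys\<in>seqs n. dsc n ys x})"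
  unfolding eps1_def seq_prob_def by (rule sum.cong) auto

lemma eps0_Not: "eps0 Q (\<lambda>n ys x. \<not> dsc n ys x) n x = eps1 Q dsc n x"
  by (simp add: eps0_def eps1_def)

lemma eps1_Not: "eps1 Q (\<lambda>n ys x. \<not> dsc n ys x) n x = eps0 Q dsc n x"
  by (simp add: eps0_def eps1_def)

lemma eps0_pos_if_eps1_less_1:
  fixes W V :: "'x::finite \<Rightarrow> 'y::finite \<Rightarrow> real"
  assumes "\<forall>x y. 0 < W x y" "is_channel V" "length x = n" "eps1 V dsc n x < 1"
  shows "0 < eps0 W dsc n x"
proof -
  have "{ys\<in>seqs n. dsc n ys x} \<noteq> {}"
  proof
    assume empty: "{ys\<in>seqs n. dsc n ys x} = {}"
    have "eps1 V dsc n x = seq_prob V x (seqs n)"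
      by (simp only: eps1_eq_seq_prob empty Diff_empty)
    then have "eps1 V dsc n x = 1"
      using seq_prob_seqs[OF assms(2,3)] by simp
    then show False
      using assms(4) by simp
  qed
  then show ?thesis
    unfolding eps0_eq_seq_prob using assms(1) by (intro seq_prob_pos) auto
qed

lemma eps1_pos_if_eps0_less_1:
  fixes W V :: "'x::finite \<Rightarrow> 'y::finite \<Rightarrow> real"
  assumes "\<forall>x y. 0 < V x y" "is_channel W" "length x = n" "eps0 W dsc n x < 1"
  shows "0 < eps1 V dsc n x"
  using eps0_pos_if_eps1_less_1[OF assms(1-3), of "\<lambda>n ys x. \<not> dsc n ys x"] assms(4)
  by (simp add: eps0_Not eps1_Not)

lemma exists_test_raising_eps0:
  fixes W V :: "'x::finite \<Rightarrow> 'y::finite \<Rightarrow> real"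
  assumes W: "is_channel W" and V: "is_channel V" and w: "\<forall>x y. w \<le> W x y"
    and C: "\<forall>x\<in>C. length x = n \<and> 0 < eps0 W dsc n x" and t: "0 < t" "t < 1"
  shows "\<exists>dsc'. \<forall>x\<in>C. w * t \<le> eps0 W dsc' n x \<and> eps0 W dsc' n x \<le> eps0 W dsc n x + t
    \<and> eps1 V dsc' n x \<le> eps1 V dsc n x"
proof -
  define A where "A x = {ys\<in>seqs n. dsc n ys x}" for x
  have "\<forall>x\<in>C. \<exists>A'. A x \<subseteq> A' \<and> A' \<subseteq> seqs n \<and> w * t \<le> seq_prob W x A'
    \<and> seq_prob W x A' \<le> seq_prob W x (A x) + t"
    using C by (auto simp: A_def eps0_eq_seq_prob intro!: enlarge_event[OF W w _ _ _ t])
  then obtain A' where A': "\<And>x. x \<in> C \<Longrightarrow> A x \<subseteq> A' x \<and> A' x \<subseteq> seqs n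
    \<and> w * t \<le> seq_prob W x (A' x) \<and> seq_prob W x (A' x) \<le> seq_prob W x (A x) + t"
    by metis
  define dsc' where "dsc' n ys x = (ys \<in> A' x)" for n :: nat and ys x
  have "w * t \<le> eps0 W dsc' n x \<and> eps0 W dsc' n x \<le> eps0 W dsc n x + t
    \<and> eps1 V dsc' n x \<le> eps1 V dsc n x" if x: "x \<in> C" for x
  proof -
    have "{ys\<in>seqs n. dsc' n ys x} = A' x"
      using A'[OF x] by (auto simp: dsc'_def)
    moreover have "seq_prob V x (seqs n - A' x) \<le> seq_prob V x (seqs n - A x)"
      using A'[OF x] by (intro seq_prob_mono[OF V]) auto
    ultimately show ?thesis
      using A'[OF x] by (simp add: eps0_eq_seq_prob eps1_eq_seq_prob A_def)
  qed
  then show ?thesis by blast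
qed

lemma exists_test_raising_eps1:
  fixes W V :: "'x::finite \<Rightarrow> 'y::finite \<Rightarrow> real"
  assumes W: "is_channel W" and V: "is_channel V" and v: "\<forall>x y. v \<le> V x y"
    and C: "\<forall>x\<in>C. length x = n \<and> 0 < eps1 V dsc n x" and t: "0 < t" "t < 1"
  shows "\<exists>dsc'. \<forall>x\<in>C. v * t \<le> eps1 V dsc' n x \<and> eps1 V dsc' n x \<le> eps1 V dsc n x + t
    \<and> eps0 W dsc' n x \<le> eps0 W dsc n x"
proof -
  have "\<forall>x\<in>C. length x = n \<and> 0 < eps0 V (\<lambda>n ys x. \<not> dsc n ys x) n x"
    using C by (simp add: eps0_Not)
  from exists_test_raising_eps0[OF V W v this t] obtain d where "\<forall>x\<in>C. v * t \<le> eps0 V d n x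
      \<and> eps0 V d n x \<le> eps0 V (\<lambda>n ys x. \<not> dsc n ys x) n x + t
      \<and> eps1 W d n x \<le> eps1 W (\<lambda>n ys x. \<not> dsc n ys x) n x"
    by blast
  then show ?thesis
    by (intro exI[of _ "\<lambda>n ys x. \<not> d n ys x"]) (simp add: eps0_Not eps1_Not)
qed

lemma exists_tests_raising_errors:
  fixes W V :: "'x::finite \<Rightarrow> 'y::finite \<Rightarrow> real" and C :: "nat \<Rightarrow> 'x list set"
  assumes W: "is_channel W" and V: "is_channel V"
    and w: "\<forall>x y. w \<le> W x y" and v: "\<forall>x y. v \<le> V x y"
    and C: "\<forall>n\<ge>1. \<forall>x\<in>C n. length x = n \<and> 0 < eps0 W dsc n x \<and> 0 < eps1 V dsc n x"
    and t: "\<forall>n\<ge>1. 0 < t0 n \<and> t0 n < 1 \<and> 0 < t1 n \<and> t1 n < 1"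
  shows "\<exists>dsc'. \<forall>n\<ge>1. \<forall>x\<in>C n.
    eps0 W dsc' n x \<le> eps0 W dsc n x + t0 n \<and> eps1 V dsc' n x \<le> eps1 V dsc n x + t1 n
    \<and> (n \<in> N \<longrightarrow> w * t0 n \<le> eps0 W dsc' n x) \<and> (n \<notin> N \<longrightarrow> v * t1 n \<le> eps1 V dsc' n x)"
proof -
  have "\<exists>d. 1 \<le> n \<longrightarrow> (\<forall>x\<in>C n.
    eps0 W d n x \<le> eps0 W dsc n x + t0 n \<and> eps1 V d n x \<le> eps1 V dsc n x + t1 n
    \<and> (n \<in> N \<longrightarrow> w * t0 n \<le> eps0 W d n x) \<and> (n \<notin> N \<longrightarrow> v * t1 n \<le> eps1 V d n x))" for n
  proof (cases "1 \<le> n")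
    case True
    note C_n = C[rule_format, OF True] and t_n = t[rule_format, OF True]
    show ?thesis
    proof (cases "n \<in> N")
      case True
      obtain d where "\<forall>x\<in>C n. w * t0 n \<le> eps0 W d n x \<and> eps0 W d n x \<le> eps0 W dsc n x + t0 n
          \<and> eps1 V d n x \<le> eps1 V dsc n x"
        using exists_test_raising_eps0[OF W V w _, of "C n" n dsc "t0 n"] C_n t_n by auto
      then show ?thesis
        using True t_n by (intro exI[of _ d]) force
    next
      case False
      obtain d where "\<forall>x\<in>C n. v * t1 n \<le> eps1 V d n x \<and> eps1 V d n x \<le> eps1 V dsc n x + t1 n
          \<and> eps0 W d n x \<le> eps0 W dsc n x"
        using exists_test_raising_eps1[OF W V v _, of "C n" n dsc "t1 n"] C_n t_n by auto
      then show ?thesis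
        using False t_n by (intro exI[of _ d]) force
    qed
  qed simp
  then obtain D where D: "\<And>n. 1 \<le> n \<Longrightarrow> \<forall>x\<in>C n.
    eps0 W (D n) n x \<le> eps0 W dsc n x + t0 n \<and> eps1 V (D n) n x \<le> eps1 V dsc n x + t1 n
    \<and> (n \<in> N \<longrightarrow> w * t0 n \<le> eps0 W (D n) n x) \<and> (n \<notin> N \<longrightarrow> v * t1 n \<le> eps1 V (D n) n x)"
    by metis
  have "eps0 W (\<lambda>n. D n n) n x = eps0 W (D n) n x" "eps1 V (\<lambda>n. D n n) n x = eps1 V (D n) n x" for n x
    by (simp_all add: eps0_def eps1_def)
  then show ?thesis
    using D by (intro exI[of _ "\<lambda>n. D n n"]) simp
qed

lemma exists_tests_with_comparable_errors:
  fixes W V :: "'x::finite \<Rightarrow> 'y::finite \<Rightarrow> real" and C :: "nat \<Rightarrow> 'x list set"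
  assumes W: "is_channel W" and V: "is_channel V" and pos: "\<forall>x y. 0 < W x y \<and> 0 < V x y"
    and w: "\<forall>x y. w \<le> W x y" and v: "\<forall>x y. v \<le> V x y" and \<tau>: "\<tau> < 1"
    and C: "\<forall>n\<ge>1. \<forall>x\<in>C n. length x = n \<and> eps0 W dsc n x \<le> a n \<and> eps1 V dsc n x \<le> c n"
    and ac: "\<forall>n\<ge>1. 0 < a n \<and> a n \<le> \<tau> \<and> 0 < c n \<and> c n \<le> \<tau>"
  shows "\<exists>dsc'. \<forall>n\<ge>1. \<forall>x\<in>C n.
    0 < eps0 W dsc' n x \<and> eps0 W dsc' n x \<le> 2 * a n \<and> eps0 W dsc' n x \<le> (1 + \<tau>) / 2
    \<and> (n \<in> N \<longrightarrow> w * (1 - \<tau>) / 2 * a n \<le> eps0 W dsc' n x)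
    \<and> 0 < eps1 V dsc' n x \<and> eps1 V dsc' n x \<le> 2 * c n \<and> eps1 V dsc' n x \<le> (1 + \<tau>) / 2
    \<and> (n \<notin> N \<longrightarrow> v * (1 - \<tau>) / 2 * c n \<le> eps1 V dsc' n x)"
proof -
  txt \<open>Raising an error x \<le> \<tau> by this margin keeps it below 2 x and below (1 + \<tau>) / 2 < 1.\<close>
  define t where "t x = (1 - \<tau>) / 2 * x" for x
  have margin: "0 < t x \<and> t x < 1 \<and> x + t x \<le> 2 * x \<and> x + t x \<le> (1 + \<tau>) / 2"
    if "0 < x" "x \<le> \<tau>" for x
  proof -
    have "t x \<le> 1 * x" "t x \<le> (1 - \<tau>) / 2 * 1"
      using that \<tau> unfolding t_def by (intro mult_right_mono mult_left_mono; simp)+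
    moreover have "0 < t x"
      using that \<tau> by (simp add: t_def)
    ultimately show ?thesis
      using that \<tau> by simp
  qed
  have codewords: "\<forall>n\<ge>1. \<forall>x\<in>C n. length x = n \<and> 0 < eps0 W dsc n x \<and> 0 < eps1 V dsc n x"
  proof (intro allI impI ballI)
    fix n x assume n: "1 \<le> n" and x: "x \<in> C n"
    have "eps0 W dsc n x < 1" "eps1 V dsc n x < 1"
      using C[rule_format, OF n x] ac[rule_format, OF n] \<tau> by linarith+
    then show "length x = n \<and> 0 < eps0 W dsc n x \<and> 0 < eps1 V dsc n x"
      using eps0_pos_if_eps1_less_1[OF _ V] eps1_pos_if_eps0_less_1[OF _ W] C[rule_format, OF n x] pos
      by blast
  qed
  have margins: "\<forall>n\<ge>1. 0 < t (a n) \<and> t (a n) < 1 \<and> 0 < t (c n) \<and> t (c n) < 1"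
    using margin ac by simp
  obtain dsc' where dsc': "\<forall>n\<ge>1. \<forall>x\<in>C n.
      eps0 W dsc' n x \<le> eps0 W dsc n x + t (a n) \<and> eps1 V dsc' n x \<le> eps1 V dsc n x + t (c n)
      \<and> (n \<in> N \<longrightarrow> w * t (a n) \<le> eps0 W dsc' n x) \<and> (n \<notin> N \<longrightarrow> v * t (c n) \<le> eps1 V dsc' n x)"
    using exists_tests_raising_errors[OF W V w v codewords margins] by blast
  have "0 < eps0 W dsc' n x \<and> eps0 W dsc' n x \<le> 2 * a n \<and> eps0 W dsc' n x \<le> (1 + \<tau>) / 2
    \<and> (n \<in> N \<longrightarrow> w * (1 - \<tau>) / 2 * a n \<le> eps0 W dsc' n x)
    \<and> 0 < eps1 V dsc' n x \<and> eps1 V dsc' n x \<le> 2 * c n \<and> eps1 V dsc' n x \<le> (1 + \<tau>) / 2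
    \<and> (n \<notin> N \<longrightarrow> v * (1 - \<tau>) / 2 * c n \<le> eps1 V dsc' n x)"
    if n: "1 \<le> n" and x: "x \<in> C n" for n x
  proof -
    note dsc'_x = dsc'[rule_format, OF n x] and C_x = C[rule_format, OF n x]
      and ac_n = ac[rule_format, OF n]
    have e0: "eps0 W dsc' n x \<le> 2 * a n \<and> eps0 W dsc' n x \<le> (1 + \<tau>) / 2"
      using dsc'_x C_x margin[of "a n"] ac_n by linarith
    have e1: "eps1 V dsc' n x \<le> 2 * c n \<and> eps1 V dsc' n x \<le> (1 + \<tau>) / 2"
      using dsc'_x C_x margin[of "c n"] ac_n by linarith
    have "0 < eps0 W dsc' n x" "0 < eps1 V dsc' n x"
      using eps0_pos_if_eps1_less_1[OF _ V] eps1_pos_if_eps0_less_1[OF _ W] C_x e0 e1 pos \<tau> by auto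
    then show ?thesis
      using e0 e1 dsc'_x by (auto simp: t_def mult.assoc)
  qed
  then show ?thesis
    by blast
qed

section \<open>Error exponents\<close>

lemma liminf_ereal_eqD:
  fixes f :: "nat \<Rightarrow> real"
  assumes lim: "liminf (\<lambda>n. ereal (f n)) = ereal E" and "0 < \<epsilon>"
  shows "eventually (\<lambda>n. E - \<epsilon> < f n) sequentially"
    and "frequently (\<lambda>n. f n < E + \<epsilon>) sequentially"
proof -
  have "ereal (E - \<epsilon>) < liminf (\<lambda>n. ereal (f n))"
    using lim \<open>0 < \<epsilon>\<close> by simp
  then show "eventually (\<lambda>n. E - \<epsilon> < f n) sequentially"
    using less_LiminfD by fastforce
  show "frequently (\<lambda>n. f n < E + \<epsilon>) sequentially"
  proof (rule ccontr)
    assume "\<not> ?thesis"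
    then have "eventually (\<lambda>n. ereal (E + \<epsilon>) \<le> ereal (f n)) sequentially"
      by (simp add: not_frequently not_less)
    then have "ereal (E + \<epsilon>) \<le> liminf (\<lambda>n. ereal (f n))"
      by (rule Liminf_bounded)
    then show False
      using lim \<open>0 < \<epsilon>\<close> by simp
  qed
qed

lemma liminf_ereal_eqI:
  fixes f :: "nat \<Rightarrow> real"
  assumes ev: "\<And>\<epsilon>. 0 < \<epsilon> \<Longrightarrow> eventually (\<lambda>n. E - \<epsilon> < f n) sequentially"
    and fr: "\<And>\<epsilon>. 0 < \<epsilon> \<Longrightarrow> frequently (\<lambda>n. f n < E + \<epsilon>) sequentially"
  shows "liminf (\<lambda>n. ereal (f n)) = ereal E"
proof (rule antisym)
  show "ereal E \<le> liminf (\<lambda>n. ereal (f n))"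
    unfolding le_Liminf_iff
  proof (intro allI impI)
    fix y :: ereal assume "y < ereal E"
    then obtain r where r: "y \<le> ereal r" "r < E"
      by (cases y) (auto intro: that[of "E - 1"])
    then have "eventually (\<lambda>n. E - (E - r) < f n) sequentially"
      by (intro ev) simp
    then show "eventually (\<lambda>n. y < ereal (f n)) sequentially"
      by eventually_elim (use r(1) in \<open>auto intro: order.strict_trans1\<close>)
  qed
  show "liminf (\<lambda>n. ereal (f n)) \<le> ereal E"
  proof (rule ccontr)
    assume "\<not> ?thesis"
    then obtain r :: real where r: "E < r" "ereal r < liminf (\<lambda>n. ereal (f n))"
      using ereal_dense2 by (metis less_ereal.simps(1) not_le)
    have "eventually (\<lambda>n. (E + r) / 2 < f n) sequentially"
      using less_LiminfD[OF less_trans[OF _ r(2)], of "ereal ((E + r) / 2)"] r(1) by simp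
    moreover have "frequently (\<lambda>n. f n < E + (r - E) / 2) sequentially"
      using r(1) by (intro fr) simp
    ultimately have "frequently (\<lambda>n. (E + r) / 2 < f n \<and> f n < E + (r - E) / 2) sequentially"
      by (simp add: frequently_eventually_conj conj_commute)
    then have "frequently (\<lambda>n. False) sequentially"
      by (rule frequently_elim1) (auto simp: field_simps)
    then show False
      by simp
  qed
qed

lemma liminf_ereal_eq_by_comparison:
  fixes f g hA hB :: "nat \<Rightarrow> real"
  assumes g: "liminf (\<lambda>n. ereal (g n)) = ereal E"
    and lower: "eventually (\<lambda>n. g n - hA n \<le> f n) sequentially" and hA: "hA \<longlonglongrightarrow> 0"
    and upper: "eventually (\<lambda>n. n \<in> N \<longrightarrow> f n \<le> g n + hB n) sequentially" and hB: "hB \<longlonglongrightarrow> 0"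
    and along: "\<forall>\<epsilon>>0. frequently (\<lambda>n. n \<in> N \<and> g n < E + \<epsilon>) sequentially"
  shows "liminf (\<lambda>n. ereal (f n)) = ereal E"
proof (rule liminf_ereal_eqI)
  fix \<epsilon> :: real assume "0 < \<epsilon>"
  then have "eventually (\<lambda>n. E - \<epsilon> / 2 < g n) sequentially"
    "eventually (\<lambda>n. hA n < \<epsilon> / 2) sequentially"
    using liminf_ereal_eqD(1)[OF g, of "\<epsilon> / 2"] order_tendstoD(2)[OF hA, of "\<epsilon> / 2"] by simp_all
  with lower show "eventually (\<lambda>n. E - \<epsilon> < f n) sequentially"
    by eventually_elim linarith
next
  fix \<epsilon> :: real assume "0 < \<epsilon>"
  then have "eventually (\<lambda>n. hB n < \<epsilon> / 2) sequentially"
    using order_tendstoD(2)[OF hB, of "\<epsilon> / 2"] by simp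
  with upper have ev: "eventually (\<lambda>n. n \<in> N \<longrightarrow> f n < g n + \<epsilon> / 2) sequentially"
    by eventually_elim auto
  have "frequently (\<lambda>n. n \<in> N \<and> g n < E + \<epsilon> / 2) sequentially"
    using along \<open>0 < \<epsilon>\<close> by simp
  from frequently_eventually_conj[OF this ev]
  show "frequently (\<lambda>n. f n < E + \<epsilon>) sequentially"
    by (rule frequently_elim1) auto
qed

lemma liminf_neg_ln_eq_if_comparable:
  fixes a a' :: "nat \<Rightarrow> real"
  assumes lim: "liminf (\<lambda>n. ereal (- ln (a n) / real n)) = ereal E"
    and K: "0 < K" and k: "0 < k"
    and le: "\<forall>n\<ge>1. 0 < a n \<and> 0 < a' n \<and> a' n \<le> K * a n"
    and ge: "\<forall>n\<ge>1. n \<in> N \<longrightarrow> k * a n \<le> a' n"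
    and along: "\<forall>\<epsilon>>0. frequently (\<lambda>n. n \<in> N \<and> - ln (a n) / real n < E + \<epsilon>) sequentially"
  shows "liminf (\<lambda>n. ereal (- ln (a' n) / real n)) = ereal E"
proof (rule liminf_ereal_eq_by_comparison[OF lim, where hA = "\<lambda>n. ln K / real n"
      and hB = "\<lambda>n. - ln k / real n" and N = N])
  show "eventually (\<lambda>n. - ln (a n) / real n - ln K / real n \<le> - ln (a' n) / real n) sequentially"
    using eventually_ge_at_top[of 1]
  proof eventually_elim
    case (elim n)
    have "ln (a' n) \<le> ln (K * a n)"
      using le[rule_format, OF elim] K by simp
    also have "\<dots> = ln K + ln (a n)"
      using le[rule_format, OF elim] K by (simp add: ln_mult)
    finally have "- ln (a n) - ln K \<le> - ln (a' n)"
      by simp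
    from divide_right_mono[OF this, of "real n"] show ?case
      by (simp add: diff_divide_distrib)
  qed
  show "eventually (\<lambda>n. n \<in> N \<longrightarrow> - ln (a' n) / real n \<le> - ln (a n) / real n + - ln k / real n)
    sequentially"
    using eventually_ge_at_top[of 1]
  proof eventually_elim
    case (elim n)
    show ?case
    proof
      assume "n \<in> N"
      have "ln k + ln (a n) = ln (k * a n)"
        using le[rule_format, OF elim] k by (simp add: ln_mult)
      also have "\<dots> \<le> ln (a' n)"
        using le[rule_format, OF elim] ge[rule_format, OF elim] \<open>n \<in> N\<close> k by simp
      finally have "- ln (a' n) \<le> - ln (a n) + - ln k"
        by simp
      from divide_right_mono[OF this, of "real n"]
      show "- ln (a' n) / real n \<le> - ln (a n) / real n + - ln k / real n"
        by (simp add: diff_divide_distrib)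
    qed
  qed
qed (fact along | real_asymp)+

lemma liminf_ln_over_n_eq_if_polynomial_loss:
  fixes M M' :: "nat \<Rightarrow> nat"
  assumes lim: "liminf (\<lambda>n. ereal (ln (real (M n)) / real n)) = ereal R"
    and bounds: "\<forall>n\<ge>1. 1 \<le> M' n \<and> M' n \<le> M n \<and> real (M n) \<le> (real n + 1) ^ d * real (M' n)"
  shows "liminf (\<lambda>n. ereal (ln (real (M' n)) / real n)) = ereal R"
proof (rule liminf_ereal_eq_by_comparison[OF lim, where hA = "\<lambda>n. real d * ln (real n + 1) / real n"
      and hB = "\<lambda>_. 0" and N = UNIV])
  show "eventually (\<lambda>n. ln (real (M n)) / real n - real d * ln (real n + 1) / real n
      \<le> ln (real (M' n)) / real n) sequentially"
    using eventually_ge_at_top[of 1]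
  proof eventually_elim
    case (elim n)
    note b = bounds[rule_format, OF elim]
    have "ln (real (M n)) \<le> ln ((real n + 1) ^ d * real (M' n))"
      using b by (subst ln_le_cancel_iff) auto
    also have "\<dots> = real d * ln (real n + 1) + ln (real (M' n))"
      using b by (simp add: ln_mult ln_realpow)
    finally have "ln (real (M n)) - real d * ln (real n + 1) \<le> ln (real (M' n))"
      by simp
    from divide_right_mono[OF this, of "real n"] show ?case
      by (simp add: diff_divide_distrib)
  qed
  show "eventually (\<lambda>n. n \<in> UNIV \<longrightarrow> ln (real (M' n)) / real n \<le> ln (real (M n)) / real n + 0)
    sequentially"
    using eventually_ge_at_top[of 1]
  proof eventually_elim
    case (elim n)
    then have "ln (real (M' n)) \<le> ln (real (M n))"
      using bounds[rule_format, OF elim] by (subst ln_le_cancel_iff) auto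
    then show ?case
      by (simp add: divide_right_mono)
  qed
  show "\<forall>\<epsilon>>0. frequently (\<lambda>n. n \<in> UNIV \<and> ln (real (M n)) / real n < R + \<epsilon>) sequentially"
    using liminf_ereal_eqD(2)[OF lim] by simp
qed real_asymp+

lemma exists_strict_mono_small_values:
  fixes r :: "nat \<Rightarrow> nat \<Rightarrow> real"
  assumes "\<And>k. frequently (\<lambda>n. r k n < 1 / Suc k) sequentially"
  shows "\<exists>s. strict_mono s \<and> (\<forall>k. r k (s k) < 1 / Suc k)"
proof -
  have ex: "\<exists>n>m. r k n < 1 / Suc k" for k m
    using assms[of k] unfolding frequently_sequentially by (metis Suc_le_eq)
  define next_index where "next_index k m = (SOME n. m < n \<and> r k n < 1 / Suc k)" for k m
  have next_index: "m < next_index k m \<and> r k (next_index k m) < 1 / Suc k" for k m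
    unfolding next_index_def using someI_ex[OF ex] .
  define s where "s = rec_nat (next_index 0 0) (\<lambda>k m. next_index (Suc k) m)"
  have s_0: "s 0 = next_index 0 0" and s_Suc: "s (Suc k) = next_index (Suc k) (s k)" for k
    by (simp_all add: s_def)
  have "r k (s k) < 1 / Suc k" for k
    by (cases k) (simp_all only: s_0 s_Suc next_index)
  moreover have "strict_mono s"
    by (intro strict_monoI_Suc) (simp only: s_Suc next_index)
  ultimately show ?thesis
    by blast
qed

text \<open>The indices are picked alternately for p and q, with thresholds tending to 0.\<close>
lemma frequently_small_split:
  fixes p q :: "nat \<Rightarrow> real"
  assumes p: "\<forall>\<epsilon>>0. frequently (\<lambda>n. p n < \<epsilon>) sequentially"
    and q: "\<forall>\<epsilon>>0. frequently (\<lambda>n. q n < \<epsilon>) sequentially"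
  shows "\<exists>N. (\<forall>\<epsilon>>0. frequently (\<lambda>n. n \<in> N \<and> p n < \<epsilon>) sequentially)
    \<and> (\<forall>\<epsilon>>0. frequently (\<lambda>n. n \<notin> N \<and> q n < \<epsilon>) sequentially)"
proof -
  define r where "r k = (if even k then p else q)" for k :: nat
  obtain s where "strict_mono s" and s_small: "\<And>k. r k (s k) < 1 / Suc k"
    using exists_strict_mono_small_values[of r] p q by (force simp: r_def)
  then have s_ge: "k \<le> s k" and s_inj: "s k = s k' \<longleftrightarrow> k = k'" for k k'
    by (simp_all add: strict_mono_imp_increasing strict_mono_eq)
  have large: "\<exists>k. even k = e \<and> n0 \<le> k \<and> 1 / Suc k < \<epsilon>" if "0 < \<epsilon>" for e n0 and \<epsilon> :: real
  proof -
    obtain j :: nat where j: "1 / \<epsilon> < j"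
      using reals_Archimedean2 by blast
    define k where "k = 2 * (n0 + j) + (if e then 0 else 1)"
    have "1 / \<epsilon> < Suc k"
      using j by (simp add: k_def)
    then have "1 / Suc k < \<epsilon>"
      using that by (simp add: field_simps)
    then show ?thesis
      by (intro exI[of _ k]) (auto simp: k_def)
  qed
  define N where "N = s ` {k. even k}"
  have "frequently (\<lambda>n. n \<in> N \<and> p n < \<epsilon>) sequentially" if "0 < \<epsilon>" for \<epsilon>
    unfolding frequently_sequentially
  proof
    fix n0
    obtain k where "even k" "n0 \<le> k" "1 / Suc k < \<epsilon>"
      using large[OF \<open>0 < \<epsilon>\<close>, of True n0] by blast
    then show "\<exists>n\<ge>n0. n \<in> N \<and> p n < \<epsilon>"
      using s_small[of k] s_ge[of k] by (intro exI[of _ "s k"]) (auto simp: N_def r_def)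
  qed
  moreover have "frequently (\<lambda>n. n \<notin> N \<and> q n < \<epsilon>) sequentially" if "0 < \<epsilon>" for \<epsilon>
    unfolding frequently_sequentially
  proof
    fix n0
    obtain k where "odd k" "n0 \<le> k" "1 / Suc k < \<epsilon>"
      using large[OF \<open>0 < \<epsilon>\<close>, of False n0] by blast
    then show "\<exists>n\<ge>n0. n \<notin> N \<and> q n < \<epsilon>"
      using s_small[of k] s_ge[of k] s_inj by (intro exI[of _ "s k"]) (auto simp: N_def r_def)
  qed
  ultimately show ?thesis
    by blast
qed

lemma liminf_ereal_attained_on_complementary_sets:
  fixes f g :: "nat \<Rightarrow> real"
  assumes "liminf (\<lambda>n. ereal (f n)) = ereal E" "liminf (\<lambda>n. ereal (g n)) = ereal E'"
  shows "\<exists>N. (\<forall>\<epsilon>>0. frequently (\<lambda>n. n \<in> N \<and> f n < E + \<epsilon>) sequentially)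
    \<and> (\<forall>\<epsilon>>0. frequently (\<lambda>n. n \<notin> N \<and> g n < E' + \<epsilon>) sequentially)"
proof -
  have "\<forall>\<epsilon>>0. frequently (\<lambda>n. f n - E < \<epsilon>) sequentially"
    "\<forall>\<epsilon>>0. frequently (\<lambda>n. g n - E' < \<epsilon>) sequentially"
    using liminf_ereal_eqD(2)[OF assms(1)] liminf_ereal_eqD(2)[OF assms(2)]
    by (simp_all add: diff_less_eq add.commute)
  from frequently_small_split[OF this] show ?thesis
    by (simp add: diff_less_eq add.commute)
qed

lemma liminf_neg_ln_Max_eq:
  fixes e e' :: "nat \<Rightarrow> 'a \<Rightarrow> real" and C C' :: "nat \<Rightarrow> 'a set"
  assumes lim: "liminf (\<lambda>n. ereal (- ln (Max (e n ` C n)) / real n)) = ereal E"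
    and C: "\<forall>n\<ge>1. finite (C n) \<and> C' n \<noteq> {} \<and> C' n \<subseteq> C n"
    and bounds: "\<forall>n\<ge>1. \<forall>x\<in>C n. 0 < e' n x \<and> e' n x \<le> K * Max (e n ` C n)
      \<and> (n \<in> N \<longrightarrow> k * Max (e n ` C n) \<le> e' n x)"
    and K: "0 < K" and k: "0 < k"
    and along: "\<forall>\<epsilon>>0. frequently (\<lambda>n. n \<in> N \<and> - ln (Max (e n ` C n)) / real n < E + \<epsilon>) sequentially"
  shows "liminf (\<lambda>n. ereal (- ln (Max (e' n ` C' n)) / real n)) = ereal E"
proof (rule liminf_neg_ln_eq_if_comparable[OF lim K k _ _ along])
  show "\<forall>n\<ge>1. 0 < Max (e n ` C n) \<and> 0 < Max (e' n ` C' n) \<and> Max (e' n ` C' n) \<le> K * Max (e n ` C n)"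
    and "\<forall>n\<ge>1. n \<in> N \<longrightarrow> k * Max (e n ` C n) \<le> Max (e' n ` C' n)"
  proof safe
    fix n :: nat assume n: "1 \<le> n"
    note C_n = C[rule_format, OF n] and bounds_n = bounds[rule_format, OF n]
    obtain x where x: "x \<in> C' n"
      using C_n by blast
    have fin: "finite (e' n ` C' n)"
      using C_n finite_subset by blast
    have x_le: "e' n x \<le> Max (e' n ` C' n)"
      using fin x by simp
    have "0 < K * Max (e n ` C n)"
      using bounds_n[of x] x C_n by force
    then show "0 < Max (e n ` C n)"
      using K by (simp add: zero_less_mult_iff)
    show "0 < Max (e' n ` C' n)"
      using bounds_n[of x] x C_n x_le by auto
    show "Max (e' n ` C' n) \<le> K * Max (e n ` C n)"
      using fin x bounds_n C_n by (auto intro!: Max.boundedI)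
    show "k * Max (e n ` C n) \<le> Max (e' n ` C' n)" if "n \<in> N"
      using bounds_n[of x] x C_n x_le that by auto
  qed
qed

section \<open>Constant composition subcodes\<close>

lemma type_of_eq_count_list: "type_of xs = (\<lambda>a. real (count_list xs a) / real (length xs))"
  by (simp add: type_of_def count_list_eq_length_filter fun_eq_iff eq_commute)

lemma type_class_pigeonhole:
  fixes f :: "'m \<Rightarrow> 'x::finite list"
  assumes I: "finite I" "I \<noteq> {}" and len: "\<forall>i\<in>I. length (f i) = n"
  shows "\<exists>S\<subseteq>I. S \<noteq> {} \<and> (\<forall>i\<in>S. \<forall>j\<in>S. type_of (f i) = type_of (f j))
    \<and> card I \<le> (n + 1) ^ CARD('x) * card S"
proof -
  define T where "T = (UNIV :: 'x set) \<rightarrow>\<^sub>E {..n}"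
  have "(\<lambda>i. count_list (f i)) \<in> I \<rightarrow> T"
    using len by (auto simp: T_def intro: order_trans[OF count_le_length])
  moreover have "finite T" "T \<noteq> {}" "card T = (n + 1) ^ CARD('x)"
    by (simp_all add: T_def card_PiE PiE_eq_empty_iff finite_PiE)
  ultimately obtain c where "card I \<le> card ((\<lambda>i. count_list (f i)) -` {c} \<inter> I) * card T"
    using pigeonhole_card[of "\<lambda>i. count_list (f i)" I T] I(1) by blast
  moreover define S where "S = (\<lambda>i. count_list (f i)) -` {c} \<inter> I"
  ultimately have card_S: "card I \<le> (n + 1) ^ CARD('x) * card S"
    using \<open>card T = _\<close> by (simp add: mult.commute)
  have "S \<noteq> {}"
    using card_S I by (auto simp: card_gt_0_iff[symmetric] simp del: card_gt_0_iff)
  moreover have "type_of (f i) = type_of (f j)" if "i \<in> S" "j \<in> S" for i j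
    using that len by (auto simp: S_def type_of_eq_count_list)
  moreover have "S \<subseteq> I"
    by (simp add: S_def)
  ultimately show ?thesis
    using card_S by blast
qed

lemma Pe_nonneg:
  assumes "is_channel P" "1 \<le> Mn n"
  shows "0 \<le> Pe P Mn enc dec n"
  unfolding Pe_def using assms
  by (subst Max_ge_iff) (auto intro!: bexI[of _ 1] sum_nonneg prod_chan_nonneg)

text \<open>Here h n enumerates S n by 1..card (S n). Decoder outputs outside S n are errors of
  the subcode anyway; they are sent to message 1.\<close>
definition subcode_enc :: "(nat \<Rightarrow> nat \<Rightarrow> nat) \<Rightarrow> (nat \<Rightarrow> nat \<Rightarrow> 'x list) \<Rightarrow> nat \<Rightarrow> nat \<Rightarrow> 'x list"
  where "subcode_enc h enc n m = enc n (h n m)"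

definition subcode_dec :: "(nat \<Rightarrow> nat set) \<Rightarrow> (nat \<Rightarrow> nat \<Rightarrow> nat) \<Rightarrow> (nat \<Rightarrow> 'z list \<Rightarrow> nat)
    \<Rightarrow> nat \<Rightarrow> 'z list \<Rightarrow> nat" where
  "subcode_dec S h dec n zs =
     (if dec n zs \<in> S n then inv_into {1..card (S n)} (h n) (dec n zs) else 1)"

context
  fixes S :: "nat \<Rightarrow> nat set" and h :: "nat \<Rightarrow> nat \<Rightarrow> nat" and Mn :: "nat \<Rightarrow> nat" and n :: nat
  assumes S: "S n \<subseteq> {1..Mn n}" "S n \<noteq> {}" and h: "bij_betw (h n) {1..card (S n)} (S n)"
begin

lemma codebook_subcode: "codebook (\<lambda>n. card (S n)) (subcode_enc h enc) n = enc n ` S n"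
  using h by (auto simp: codebook_def subcode_enc_def bij_betw_def image_image[symmetric]
      simp del: image_image)

lemma valid_code_subcode:
  assumes "valid_code b B Mn enc dec n"
  shows "valid_code b B (\<lambda>n. card (S n)) (subcode_enc h enc) (subcode_dec S h dec) n"
proof -
  have "1 \<le> card (S n)"
    using h S(2) by (auto simp: bij_betw_def)
  moreover have "subcode_dec S h dec n zs \<in> {1..card (S n)}" for zs
  proof (cases "dec n zs \<in> S n")
    case True
    have "inv_into {1..card (S n)} (h n) (dec n zs) \<in> {1..card (S n)}"
      by (rule inv_into_into) (use h True in \<open>simp add: bij_betw_def\<close>)
    then show ?thesis
      using True by (simp add: subcode_dec_def)
  qed (use \<open>1 \<le> card (S n)\<close> in \<open>simp add: subcode_dec_def\<close>)
  moreover have "h n m \<in> {1..Mn n}" if "m \<in> {1..card (S n)}" for m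
    using bij_betw_apply[OF h that] S(1) by auto
  ultimately show ?thesis
    using assms by (auto simp: valid_code_def subcode_enc_def)
qed

lemma Pe_subcode_le:
  fixes enc :: "nat \<Rightarrow> nat \<Rightarrow> 'x::finite list" and dec :: "nat \<Rightarrow> 'z::finite list \<Rightarrow> nat"
  assumes P: "is_channel P" and valid: "valid_code b B Mn enc dec n"
  shows "Pe P (\<lambda>n. card (S n)) (subcode_enc h enc) (subcode_dec S h dec) n \<le> Pe P Mn enc dec n"
proof -
  define err where "err enc dec m = (\<Sum>zs\<in>{zs\<in>seqs n. dec zs \<noteq> m}. prod_chan P (enc m) zs)"
    for enc :: "nat \<Rightarrow> 'x list" and dec :: "'z list \<Rightarrow> nat" and m
  have "err (subcode_enc h enc n) (subcode_dec S h dec n) m \<le> err (enc n) (dec n) (h n m)"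
    if m: "m \<in> {1..card (S n)}" for m
  proof -
    have "{zs\<in>seqs n. subcode_dec S h dec n zs \<noteq> m} \<subseteq> {zs\<in>seqs n. dec n zs \<noteq> h n m}"
      using h m by (auto simp: subcode_dec_def bij_betw_def inj_on_eq_iff)
    then show ?thesis
      unfolding err_def subcode_enc_def using P
      by (intro sum_mono2) (auto intro: rev_finite_subset[OF finite_seqs] simp: prod_chan_def is_channel_def prod_nonneg)
  qed
  also have "err (enc n) (dec n) (h n m) \<le> Pe P Mn enc dec n" if "m \<in> {1..card (S n)}" for m
  proof -
    have "h n m \<in> {1..Mn n}"
      using bij_betw_apply[OF h that] S(1) by auto
    then show ?thesis
      by (auto simp: Pe_def err_def intro!: Max_ge)
  qed
  finally show ?thesis
    using valid_code_subcode[OF valid] by (auto simp: Pe_def err_def[symmetric] valid_code_def intro!: Max.boundedI)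
qed

end

lemma exists_enumerated_type_classes:
  fixes enc :: "nat \<Rightarrow> nat \<Rightarrow> 'x::finite list"
  assumes valid: "\<forall>n\<ge>1. valid_code b B Mn enc dec n"
  shows "\<exists>S h. \<forall>n\<ge>1. S n \<subseteq> {1..Mn n} \<and> S n \<noteq> {} \<and> bij_betw (h n) {1..card (S n)} (S n)
    \<and> (\<forall>i\<in>S n. \<forall>j\<in>S n. type_of (enc n i) = type_of (enc n j))
    \<and> Mn n \<le> (n + 1) ^ CARD('x) * card (S n)"
proof -
  have "\<exists>S h. 1 \<le> n \<longrightarrow> S \<subseteq> {1..Mn n} \<and> S \<noteq> {} \<and> bij_betw h {1..card S} S
      \<and> (\<forall>i\<in>S. \<forall>j\<in>S. type_of (enc n i) = type_of (enc n j)) \<and> Mn n \<le> (n + 1) ^ CARD('x) * card S"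
    for n
  proof (cases "1 \<le> n")
    case True
    with valid have "finite {1..Mn n}" "{1..Mn n} \<noteq> {}" "\<forall>i\<in>{1..Mn n}. length (enc n i) = n"
      by (auto simp: valid_code_def)
    from type_class_pigeonhole[OF this] obtain S where S: "S \<subseteq> {1..Mn n}" "S \<noteq> {}"
      "\<forall>i\<in>S. \<forall>j\<in>S. type_of (enc n i) = type_of (enc n j)" "Mn n \<le> (n + 1) ^ CARD('x) * card S"
      unfolding card_atLeastAtMost diff_Suc_1 by blast
    moreover obtain h where "bij_betw h {1..card S} S"
      using ex_bij_betw_nat_finite_1 finite_subset[OF S(1)] by blast
    ultimately show ?thesis
      by blast
  qed simp
  then obtain S h where "\<And>n. 1 \<le> n \<Longrightarrow> S n \<subseteq> {1..Mn n} \<and> S n \<noteq> {}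
      \<and> bij_betw (h n) {1..card (S n)} (S n)
      \<and> (\<forall>i\<in>S n. \<forall>j\<in>S n. type_of (enc n i) = type_of (enc n j))
      \<and> Mn n \<le> (n + 1) ^ CARD('x) * card (S n)"
    by metis
  then show ?thesis
    by blast
qed

lemma exists_constant_composition_subcode:
  fixes enc :: "nat \<Rightarrow> nat \<Rightarrow> 'x::finite list" and dec :: "nat \<Rightarrow> 'z::finite list \<Rightarrow> nat"
  assumes P: "is_channel P" and valid: "\<forall>n\<ge>1. valid_code b B Mn enc dec n"
  shows "\<exists>Mn' enc' dec'. constant_composition Mn' enc' \<and> (\<forall>n\<ge>1.
    valid_code b B Mn' enc' dec' n \<and> Pe P Mn' enc' dec' n \<le> Pe P Mn enc dec n
    \<and> codebook Mn' enc' n \<subseteq> codebook Mn enc n \<and> Mn' n \<le> Mn n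
    \<and> real (Mn n) \<le> (real n + 1) ^ CARD('x) * real (Mn' n))"
proof -
  obtain S h where enum: "\<forall>n\<ge>1. S n \<subseteq> {1..Mn n} \<and> S n \<noteq> {} \<and> bij_betw (h n) {1..card (S n)} (S n)
    \<and> (\<forall>i\<in>S n. \<forall>j\<in>S n. type_of (enc n i) = type_of (enc n j))
    \<and> Mn n \<le> (n + 1) ^ CARD('x) * card (S n)"
    using exists_enumerated_type_classes[OF valid] by blast
  then have subcode: "S n \<subseteq> {1..Mn n}" "S n \<noteq> {}" "bij_betw (h n) {1..card (S n)} (S n)"
    and S_type: "\<forall>i\<in>S n. \<forall>j\<in>S n. type_of (enc n i) = type_of (enc n j)"
    and S_card: "Mn n \<le> (n + 1) ^ CARD('x) * card (S n)" if "1 \<le> n" for n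
    using that by blast+
  have codebook': "codebook (\<lambda>n. card (S n)) (subcode_enc h enc) n = enc n ` S n" if "1 \<le> n" for n
    using codebook_subcode[of S n Mn h enc] subcode[OF that] by blast
  have "constant_composition (\<lambda>n. card (S n)) (subcode_enc h enc)"
    unfolding constant_composition_def
  proof (intro allI impI ballI)
    fix n xs xs'
    assume n: "1 \<le> n" and "xs \<in> codebook (\<lambda>n. card (S n)) (subcode_enc h enc) n"
      "xs' \<in> codebook (\<lambda>n. card (S n)) (subcode_enc h enc) n"
    then show "type_of xs = type_of xs'"
      unfolding codebook'[OF n] using S_type[OF n] by blast
  qed
  moreover have "valid_code b B (\<lambda>n. card (S n)) (subcode_enc h enc) (subcode_dec S h dec) n
    \<and> Pe P (\<lambda>n. card (S n)) (subcode_enc h enc) (subcode_dec S h dec) n \<le> Pe P Mn enc dec n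
    \<and> codebook (\<lambda>n. card (S n)) (subcode_enc h enc) n \<subseteq> codebook Mn enc n \<and> card (S n) \<le> Mn n
    \<and> real (Mn n) \<le> (real n + 1) ^ CARD('x) * real (card (S n))" if n: "1 \<le> n" for n
  proof (intro conjI)
    show "valid_code b B (\<lambda>n. card (S n)) (subcode_enc h enc) (subcode_dec S h dec) n"
      using valid n valid_code_subcode[of S n Mn h b B enc dec] subcode[OF n] by blast
    show "Pe P (\<lambda>n. card (S n)) (subcode_enc h enc) (subcode_dec S h dec) n \<le> Pe P Mn enc dec n"
      using valid n Pe_subcode_le[of S n Mn h P b B enc dec] subcode[OF n] P by blast
    show "codebook (\<lambda>n. card (S n)) (subcode_enc h enc) n \<subseteq> codebook Mn enc n"
      unfolding codebook'[OF n] using subcode(1)[OF n] by (auto simp: codebook_def)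
    show "card (S n) \<le> Mn n"
      using subcode(1)[OF n] card_mono[of "{1..Mn n}" "S n"] by simp
    have "real (Mn n) \<le> real ((n + 1) ^ CARD('x) * card (S n))"
      using S_card[OF n] by (simp only: of_nat_le_iff)
    then show "real (Mn n) \<le> (real n + 1) ^ CARD('x) * real (card (S n))"
      by (simp add: add.commute)
  qed
  ultimately show ?thesis
    by blast
qed

lemma subcode_error_and_rate:
  assumes P: "is_channel P" and Pe: "Pe P Mn enc dec \<longlonglongrightarrow> 0"
    and rate: "liminf (\<lambda>n. ereal (ln (real (Mn n)) / real n)) = ereal R"
    and sub: "\<forall>n\<ge>1. valid_code b B Mn' enc' dec' n \<and> Pe P Mn' enc' dec' n \<le> Pe P Mn enc dec n
      \<and> Mn' n \<le> Mn n \<and> real (Mn n) \<le> (real n + 1) ^ d * real (Mn' n)"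
  shows "Pe P Mn' enc' dec' \<longlonglongrightarrow> 0"
    and "liminf (\<lambda>n. ereal (ln (real (Mn' n)) / real n)) = ereal R"
proof -
  have "eventually (\<lambda>n. 0 \<le> Pe P Mn' enc' dec' n \<and> Pe P Mn' enc' dec' n \<le> Pe P Mn enc dec n)
      sequentially"
    using eventually_ge_at_top[of 1]
    by eventually_elim (use sub P in \<open>auto simp: valid_code_def intro: Pe_nonneg\<close>)
  then show "Pe P Mn' enc' dec' \<longlonglongrightarrow> 0"
    by (intro tendsto_sandwich[OF _ _ tendsto_const Pe]) (auto elim: eventually_mono)
  show "liminf (\<lambda>n. ereal (ln (real (Mn' n)) / real n)) = ereal R"
    using sub by (intro liminf_ln_over_n_eq_if_polynomial_loss[OF rate]) (auto simp: valid_code_def)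
qed

section \<open>Discrimination functions preserving the exponents\<close>

lemma eps0_le_eps0C: "x \<in> codebook Mn enc n \<Longrightarrow> eps0 W dsc n x \<le> eps0C W Mn enc dsc n"
  by (simp add: eps0C_def codebook_def)

lemma eps1_le_eps1C: "x \<in> codebook Mn enc n \<Longrightarrow> eps1 V dsc n x \<le> eps1C V Mn enc dsc n"
  by (simp add: eps1C_def codebook_def)

lemma eps0C_eps1C_pos:
  fixes W V :: "'x::finite \<Rightarrow> 'y::finite \<Rightarrow> real"
  assumes W: "is_channel W" and V: "is_channel V" and pos: "\<forall>x y. 0 < W x y \<and> 0 < V x y"
    and len: "\<forall>x\<in>codebook Mn enc n. length x = n" and ne: "codebook Mn enc n \<noteq> {}"
    and less_1: "eps0C W Mn enc dsc n < 1" "eps1C V Mn enc dsc n < 1"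
  shows "0 < eps0C W Mn enc dsc n \<and> 0 < eps1C V Mn enc dsc n"
proof -
  obtain x where x: "x \<in> codebook Mn enc n"
    using ne by blast
  have "eps0 W dsc n x < 1" "eps1 V dsc n x < 1"
    using eps0_le_eps0C[OF x, of W dsc] eps1_le_eps1C[OF x, of V dsc] less_1 by linarith+
  then have "0 < eps0 W dsc n x" "0 < eps1 V dsc n x"
    using eps0_pos_if_eps1_less_1[OF _ V] eps1_pos_if_eps0_less_1[OF _ W] pos len x by auto
  then show ?thesis
    using eps0_le_eps0C[OF x, of W dsc] eps1_le_eps1C[OF x, of V dsc] by linarith
qed

lemma ex_pos_lower_bound:
  fixes f :: "'a::finite \<Rightarrow> real"
  assumes "\<forall>z. 0 < f z"
  shows "\<exists>c>0. \<forall>z. c \<le> f z"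
  using assms by (intro exI[of _ "Min (range f)"]) auto

lemma exists_discrimination_preserving_exponents:
  fixes W V :: "'x::finite \<Rightarrow> 'y::finite \<Rightarrow> real"
  assumes W: "is_channel W" and V: "is_channel V" and pos: "\<forall>x y. 0 < W x y \<and> 0 < V x y"
    and len: "\<forall>n\<ge>1. \<forall>x\<in>codebook Mn enc n. length x = n"
    and sub: "\<forall>n\<ge>1. codebook Mn' enc' n \<noteq> {} \<and> codebook Mn' enc' n \<subseteq> codebook Mn enc n"
    and \<tau>: "\<tau> < 1" and err: "\<forall>n\<ge>1. max (eps0C W Mn enc dsc n) (eps1C V Mn enc dsc n) \<le> \<tau>"
    and E0: "liminf (\<lambda>n. ereal (- ln (eps0C W Mn enc dsc n) / real n)) = ereal E0"
    and E1: "liminf (\<lambda>n. ereal (- ln (eps1C V Mn enc dsc n) / real n)) = ereal E1"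
  shows "\<exists>dsc' \<tau>'. \<tau>' < 1 \<and> (\<forall>n\<ge>1. max (eps0C W Mn' enc' dsc' n) (eps1C V Mn' enc' dsc' n) \<le> \<tau>')
    \<and> liminf (\<lambda>n. ereal (- ln (eps0C W Mn' enc' dsc' n) / real n)) = ereal E0
    \<and> liminf (\<lambda>n. ereal (- ln (eps1C V Mn' enc' dsc' n) / real n)) = ereal E1"
proof -
  define C where "C = codebook Mn enc"
  define a where "a n = eps0C W Mn enc dsc n" for n
  define c where "c n = eps1C V Mn enc dsc n" for n
  have codewords: "\<forall>n\<ge>1. \<forall>x\<in>C n. length x = n \<and> eps0 W dsc n x \<le> a n \<and> eps1 V dsc n x \<le> c n"
    using len by (simp add: C_def a_def c_def eps0_le_eps0C eps1_le_eps1C)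
  have ac: "\<forall>n\<ge>1. 0 < a n \<and> a n \<le> \<tau> \<and> 0 < c n \<and> c n \<le> \<tau>"
    using eps0C_eps1C_pos[OF W V pos] len sub err \<tau> by (fastforce simp: a_def c_def)
  obtain w v where w: "0 < w" "\<forall>x y. w \<le> W x y" and v: "0 < v" "\<forall>x y. v \<le> V x y"
    using ex_pos_lower_bound[of "\<lambda>(x, y). W x y"] ex_pos_lower_bound[of "\<lambda>(x, y). V x y"] pos
    by auto
  obtain N where
    along0: "\<forall>\<epsilon>>0. frequently (\<lambda>n. n \<in> N \<and> - ln (a n) / real n < E0 + \<epsilon>) sequentially" and
    along1: "\<forall>\<epsilon>>0. frequently (\<lambda>n. n \<notin> N \<and> - ln (c n) / real n < E1 + \<epsilon>) sequentially"
    using liminf_ereal_attained_on_complementary_sets[OF E0 E1] by (auto simp: a_def c_def)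
  obtain dsc' where bounds: "\<And>n x. 1 \<le> n \<Longrightarrow> x \<in> C n \<Longrightarrow>
    0 < eps0 W dsc' n x \<and> eps0 W dsc' n x \<le> 2 * a n \<and> eps0 W dsc' n x \<le> (1 + \<tau>) / 2
    \<and> (n \<in> N \<longrightarrow> w * (1 - \<tau>) / 2 * a n \<le> eps0 W dsc' n x)
    \<and> 0 < eps1 V dsc' n x \<and> eps1 V dsc' n x \<le> 2 * c n \<and> eps1 V dsc' n x \<le> (1 + \<tau>) / 2
    \<and> (n \<notin> N \<longrightarrow> v * (1 - \<tau>) / 2 * c n \<le> eps1 V dsc' n x)"
    using exists_tests_with_comparable_errors[OF W V pos w(2) v(2) \<tau> codewords ac, of N] by blast
  have sub': "\<forall>n\<ge>1. finite (C n) \<and> codebook Mn' enc' n \<noteq> {} \<and> codebook Mn' enc' n \<subseteq> C n"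
    using sub by (simp add: C_def codebook_def)
  have "max (eps0C W Mn' enc' dsc' n) (eps1C V Mn' enc' dsc' n) \<le> (1 + \<tau>) / 2" if n: "1 \<le> n" for n
  proof -
    have "finite (codebook Mn' enc' n)" "codebook Mn' enc' n \<noteq> {}" "codebook Mn' enc' n \<subseteq> C n"
      using sub'[rule_format, OF n] finite_subset by auto
    then have "eps0C W Mn' enc' dsc' n \<le> (1 + \<tau>) / 2" "eps1C V Mn' enc' dsc' n \<le> (1 + \<tau>) / 2"
      unfolding eps0C_def eps1C_def by (intro Max.boundedI; use bounds[OF n] in force)+
    then show ?thesis
      by simp
  qed
  moreover have "liminf (\<lambda>n. ereal (- ln (eps0C W Mn' enc' dsc' n) / real n)) = ereal E0"
    unfolding eps0C_def
    by (rule liminf_neg_ln_Max_eq[where K = 2 and k = "w * (1 - \<tau>) / 2" and N = N])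
      (use E0 along0 sub' bounds w \<tau> in \<open>simp_all add: a_def C_def eps0C_def\<close>)
  moreover have "liminf (\<lambda>n. ereal (- ln (eps1C V Mn' enc' dsc' n) / real n)) = ereal E1"
    unfolding eps1C_def
    by (rule liminf_neg_ln_Max_eq[where K = 2 and k = "v * (1 - \<tau>) / 2" and N = "- N"])
      (use E1 along1 sub' bounds v \<tau> in \<open>simp_all add: c_def C_def eps1C_def\<close>)
  moreover have "(1 + \<tau>) / 2 < 1"
    using \<tau> by simp
  ultimately show ?thesis
    by blast
qed

theorem lemma2:
  fixes P :: "'x::finite \<Rightarrow> 'z::finite \<Rightarrow> real"
    and W V :: "'x \<Rightarrow> 'y::finite \<Rightarrow> real"
    and b :: "'x \<Rightarrow> real" and B :: real
    and Mn :: "nat \<Rightarrow> nat" and enc :: "nat \<Rightarrow> nat \<Rightarrow> 'x list"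
    and dec :: "nat \<Rightarrow> 'z list \<Rightarrow> nat" and dsc :: "nat \<Rightarrow> 'y list \<Rightarrow> 'x list \<Rightarrow> bool"
    and R E0 E1 :: real
  assumes "is_channel P" and "is_channel W" and "is_channel V"
    and "\<forall>x y. W x y * V x y \<noteq> 0"
    and "\<forall>x. 0 \<le> b x" and "0 \<le> B"
    and "achieves P W V b B Mn enc dec dsc R E0 E1"
  shows "\<exists>Mn' enc' dec' dsc'. achieves P W V b B Mn' enc' dec' dsc' R E0 E1
           \<and> constant_composition Mn' enc'"
proof -
  note P = assms(1) and W = assms(2) and V = assms(3)
  have pos: "\<forall>x y. 0 < W x y \<and> 0 < V x y"
    using assms(2-4) by (auto simp: is_channel_def order_le_less)
  obtain \<tau> where valid: "\<forall>n\<ge>1. valid_code b B Mn enc dec n"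
    and err: "\<tau> < 1" "\<forall>n\<ge>1. max (eps0C W Mn enc dsc n) (eps1C V Mn enc dsc n) \<le> \<tau>"
    and Pe: "Pe P Mn enc dec \<longlonglongrightarrow> 0"
    and rate: "liminf (\<lambda>n. ereal (ln (real (Mn n)) / real n)) = ereal R"
    and E0: "liminf (\<lambda>n. ereal (- ln (eps0C W Mn enc dsc n) / real n)) = ereal E0"
    and E1: "liminf (\<lambda>n. ereal (- ln (eps1C V Mn enc dsc n) / real n)) = ereal E1"
    using assms(7) unfolding achieves_def by blast
  obtain Mn' enc' dec' where cc: "constant_composition Mn' enc'"
    and sub: "\<forall>n\<ge>1. valid_code b B Mn' enc' dec' n \<and> Pe P Mn' enc' dec' n \<le> Pe P Mn enc dec n
      \<and> codebook Mn' enc' n \<subseteq> codebook Mn enc n \<and> Mn' n \<le> Mn n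
      \<and> real (Mn n) \<le> (real n + 1) ^ CARD('x) * real (Mn' n)"
    using exists_constant_composition_subcode[OF P valid] by blast
  have "Pe P Mn' enc' dec' \<longlonglongrightarrow> 0" "liminf (\<lambda>n. ereal (ln (real (Mn' n)) / real n)) = ereal R"
    using subcode_error_and_rate[OF P Pe rate] sub by blast+
  moreover obtain dsc' \<tau>' where "\<tau>' < 1"
    "\<forall>n\<ge>1. max (eps0C W Mn' enc' dsc' n) (eps1C V Mn' enc' dsc' n) \<le> \<tau>'"
    "liminf (\<lambda>n. ereal (- ln (eps0C W Mn' enc' dsc' n) / real n)) = ereal E0"
    "liminf (\<lambda>n. ereal (- ln (eps1C V Mn' enc' dsc' n) / real n)) = ereal E1"
    using exists_discrimination_preserving_exponents[OF W V pos _ _ err E0 E1, of Mn' enc'] valid sub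
    by (auto simp: valid_code_def codebook_def)
  ultimately show ?thesis
    using cc sub unfolding achieves_def by blast
qed

end
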